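(* Let $k\ge1$, $\alpha_i\in(1,2)$ and $l_i>0$ for $i=1,\dots,k$. Let $Q_{\mathbf n}=T_{\mathbf n}(q_{\boldsymbol\alpha})$ with $q_{\boldsymbol\alpha}(\boldsymbol\theta)=\sum_{i=1}^kl_i|\theta_i|^{\alpha_i}$, and let $R_{\mathbf n}=T_{\mathbf n}(r_{\boldsymbol\alpha})$ with $r_{\boldsymbol\alpha}(\boldsymbol\theta)=\sum_{i=1}^k l_i(2-2\cos\theta_i)^{\alpha_i/2}$, equivalently $R_{\mathbf n}=\sum_{i=1}^k I_{n_1\cdots n_{i-1}}\otimes l_iT_{n_i}\big((2-2\cos\theta)^{\alpha_i/2}\big)\otimes I_{n_{i+1}\cdots n_k}$. Then for every $\mathbf n\in\mathbb N^k$ and every nonzero $\mathbf z\in\mathbb R^{N(\mathbf n)}$, $$1<\frac{\mathbf z^\top Q_{\mathbf n}\mathbf z}{\mathbf z^\top R_{\mathbf n}\mathbf z}<\frac{\pi^2}{4}.$$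
   Context: $N(\mathbf n)=n_1\cdots n_k$. For $h\in L^1([-\pi,\pi]^k)$, $T_{\mathbf n}(h)=[\hat h_{\mathbf i-\mathbf j}]_{\mathbf i,\mathbf j=\mathbf 1}^{\mathbf n}$ is the $k$-level Toeplitz matrix with Fourier coefficients $\hat h_{\mathbf j}=\frac1{(2\pi)^k}\int h(\boldsymbol\theta)e^{\iota\langle\mathbf j,\boldsymbol\theta\rangle}d\boldsymbol\theta$; unilevel $T_n(h)$ analogously. *)

theory Defs
  imports "HOL-Analysis.Analysis"
begin

text \<open>k-level setting: the levels are indexed by a finite type 'k (so k = CARD('k) \<ge> 1).
  A symbol h is a function on real^'k; its Fourier coefficients are taken over [-pi,pi]^k.\<close>

definition fourier_coeff :: "(real^'k \<Rightarrow> real) \<Rightarrow> ('k \<Rightarrow> int) \<Rightarrow> complex" where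
  "fourier_coeff h j =
     integral (cbox (\<chi> i. - pi) (\<chi> i. pi))
       (\<lambda>\<theta>. complex_of_real (h \<theta>) *
             exp (\<i> * complex_of_real (\<Sum>l\<in>UNIV. real_of_int (j l) * \<theta> $ l)))
     / complex_of_real ((2 * pi) ^ CARD('k))"

definition multi_idx :: "('k \<Rightarrow> nat) \<Rightarrow> ('k \<Rightarrow> nat) set" where
  "multi_idx n = {i. \<forall>l. i l < n l}"

definition toeplitz_entry :: "(real^'k \<Rightarrow> real) \<Rightarrow> ('k \<Rightarrow> nat) \<Rightarrow> ('k \<Rightarrow> nat) \<Rightarrow> complex" where
  "toeplitz_entry h i j = fourier_coeff h (\<lambda>l. int (i l) - int (j l))"

definition toeplitz_qform :: "(real^'k \<Rightarrow> real) \<Rightarrow> ('k \<Rightarrow> nat) \<Rightarrow> (('k \<Rightarrow> nat) \<Rightarrow> real) \<Rightarrow> complex" where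
  "toeplitz_qform h n z =
     (\<Sum>i\<in>multi_idx n. \<Sum>j\<in>multi_idx n.
        complex_of_real (z i) * toeplitz_entry h i j * complex_of_real (z j))"

end

theory Submission
  imports Defs "HOL-Computational_Algebra.Polynomial"
begin

(* Both quadratic forms are integrals against one weight: z^T T_n(h) z equals (2 pi)^-k times
   the integral of h |p|^2 over [-pi, pi]^k, where p(theta) = sum_i z_i e^(i <i, theta>).
   From 2 |sin (x/2)| <= |x| <= pi |sin (x/2)| on [-pi, pi] (Jordan's inequality) and
   1 < alpha_l < 2 one gets r <= q <= (pi^2/4) r pointwise, strictly on (0, pi)^k.  The integral
   inequalities are strict because the nonzero trigonometric polynomial p cannot vanish on all
   of (0, pi)^k: if e enumerates the levels and N > n_l for all l, then along the curve
   theta_l = t N^(e l) it becomes an ordinary nonzero polynomial in e^(it) (Kronecker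
   substitution: distinct multi-indices give distinct base-N exponents), which has only finitely
   many roots. *)

lemma sin_ge_two_div_pi_mult:
  assumes "0 \<le> y" "y \<le> pi/2"
  shows "2/pi * y \<le> sin y"
proof (cases "y = 0")
  case False
  have tan_ge: "u * cos u \<le> sin u" if "0 \<le> u" "u \<le> pi/2" for u :: real
  proof -
    have "sin 0 - 0 * cos 0 \<le> sin u - u * cos u"
      by (rule DERIV_nonneg_imp_nondecreasing[OF that(1)])
        (use that in \<open>auto intro!: exI derivative_eq_intros mult_nonneg_nonneg sin_ge_zero\<close>)
    then show ?thesis by simp
  qed
  have "sin (pi/2) / (pi/2) \<le> sin y / y"
  proof (rule DERIV_nonpos_imp_nonincreasing[OF assms(2)])
    fix u assume u: "y \<le> u" "u \<le> pi/2"
    then have "0 < u" using assms False by linarith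
    then show "\<exists>D. ((\<lambda>x. sin x / x) has_real_derivative D) (at u) \<and> D \<le> 0"
      using tan_ge[of u] u
      by (auto intro!: exI[of _ "(u * cos u - sin u) / u\<^sup>2"] derivative_eq_intros
          simp: divide_nonpos_pos power2_eq_square)
  qed
  then show ?thesis using assms False by (simp add: field_simps)
qed simp

lemma abs_sin_less_abs:
  fixes x :: real
  assumes "x \<noteq> 0"
  shows "\<bar>sin x\<bar> < \<bar>x\<bar>"
proof (cases "\<bar>cos (x/2)\<bar> = 1")
  case True
  then have "(cos (x/2))\<^sup>2 = 1" by (metis power2_abs one_power2)
  then have "sin (x/2) = 0" using sin_squared_eq[of "x/2"] by simp
  then show ?thesis using sin_double[of "x/2"] assms by simp
next
  case False
  then have "\<bar>cos (x/2)\<bar> < 1" using abs_cos_le_one[of "x/2"] by linarith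
  have "\<bar>sin x\<bar> = 2 * \<bar>sin (x/2)\<bar> * \<bar>cos (x/2)\<bar>"
    using sin_double[of "x/2"] by (simp add: abs_mult)
  also have "\<dots> \<le> \<bar>x\<bar> * \<bar>cos (x/2)\<bar>"
    using abs_sin_x_le_abs_x[of "x/2"] by (intro mult_right_mono) auto
  also have "\<dots> < \<bar>x\<bar>"
    using \<open>\<bar>cos (x/2)\<bar> < 1\<close> assms by (simp add: mult_less_cancel_left1)
  finally show ?thesis .
qed

lemma two_minus_two_cos_powr: "(2 - 2 * cos (x::real)) powr (a/2) = (2 * \<bar>sin (x/2)\<bar>) powr a"
proof -
  have "2 - 2 * cos x = (2 * \<bar>sin (x/2)\<bar>) powr 2"
    using cos_double_sin[of "x/2"] by (simp add: power2_eq_square)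
  then have "(2 - 2 * cos x) powr (a/2) = (2 * \<bar>sin (x/2)\<bar>) powr (2 * (a/2))"
    by (simp only: powr_powr)
  then show ?thesis by simp
qed

lemma abs_le_pi_mult_abs_sin_half:
  fixes x :: real
  assumes "\<bar>x\<bar> \<le> pi"
  shows "\<bar>x\<bar> \<le> pi * \<bar>sin (x/2)\<bar>"
proof -
  have "0 \<le> sin (\<bar>x\<bar>/2)"
    using assms by (intro sin_ge_zero) auto
  moreover have "\<bar>sin (x/2)\<bar> = \<bar>sin (\<bar>x\<bar>/2)\<bar>"
    by (cases "x \<ge> 0") auto
  ultimately have "\<bar>sin (x/2)\<bar> = sin (\<bar>x\<bar>/2)" by simp
  moreover have "2/pi * (\<bar>x\<bar>/2) \<le> sin (\<bar>x\<bar>/2)"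
    using assms by (intro sin_ge_two_div_pi_mult) auto
  ultimately show ?thesis by (simp add: field_simps)
qed

lemma symbol_le_abs_powr:
  fixes x a :: real
  assumes "0 \<le> a"
  shows "(2 - 2 * cos x) powr (a/2) \<le> \<bar>x\<bar> powr a"
  unfolding two_minus_two_cos_powr
  using abs_sin_x_le_abs_x[of "x/2"] assms by (intro powr_mono2) auto

lemma symbol_less_abs_powr:
  fixes x a :: real
  assumes "0 < a" "x \<noteq> 0"
  shows "(2 - 2 * cos x) powr (a/2) < \<bar>x\<bar> powr a"
  unfolding two_minus_two_cos_powr
  using abs_sin_less_abs[of "x/2"] assms by (intro powr_less_mono2) auto

lemma abs_powr_le_pi_half_powr_mult_symbol:
  fixes x a :: real
  assumes "0 \<le> a" "\<bar>x\<bar> \<le> pi"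
  shows "\<bar>x\<bar> powr a \<le> (pi/2) powr a * (2 - 2 * cos x) powr (a/2)"
proof -
  have "\<bar>x\<bar> powr a \<le> (pi/2 * (2 * \<bar>sin (x/2)\<bar>)) powr a"
    using abs_le_pi_mult_abs_sin_half[OF assms(2)] assms(1) by (intro powr_mono2) auto
  then show ?thesis unfolding two_minus_two_cos_powr by (simp add: powr_mult powr_divide)
qed

lemma abs_powr_le_symbol:
  fixes x a :: real
  assumes "0 \<le> a" "a \<le> 2" "\<bar>x\<bar> \<le> pi"
  shows "\<bar>x\<bar> powr a \<le> pi\<^sup>2/4 * (2 - 2 * cos x) powr (a/2)"
proof -
  have "\<bar>x\<bar> powr a \<le> (pi/2) powr a * (2 - 2 * cos x) powr (a/2)"
    using abs_powr_le_pi_half_powr_mult_symbol[OF assms(1,3)] .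
  also have "\<dots> \<le> (pi/2) powr 2 * (2 - 2 * cos x) powr (a/2)"
    using assms pi_gt3 by (intro mult_right_mono powr_mono) auto
  finally show ?thesis by (simp add: power2_eq_square)
qed

lemma abs_powr_less_symbol:
  fixes x a :: real
  assumes "0 < a" "a < 2" "\<bar>x\<bar> \<le> pi" "x \<noteq> 0"
  shows "\<bar>x\<bar> powr a < pi\<^sup>2/4 * (2 - 2 * cos x) powr (a/2)"
proof -
  have "0 < \<bar>sin (x/2)\<bar>"
    using abs_le_pi_mult_abs_sin_half[OF assms(3)] assms(4) by (auto simp: mult_le_0_iff)
  then have "0 < (2 - 2 * cos x) powr (a/2)"
    unfolding two_minus_two_cos_powr by simp
  have "\<bar>x\<bar> powr a \<le> (pi/2) powr a * (2 - 2 * cos x) powr (a/2)"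
    using abs_powr_le_pi_half_powr_mult_symbol[of a x] assms by simp
  also have "\<dots> < (pi/2) powr 2 * (2 - 2 * cos x) powr (a/2)"
    using assms pi_gt3 \<open>0 < (2 - 2 * cos x) powr (a/2)\<close>
    by (intro mult_strict_right_mono powr_less_mono) auto
  finally show ?thesis by (simp add: power2_eq_square)
qed

lemma weighted_symbol_sums_le:
  fixes \<theta> :: "real^'k::finite" and \<alpha> w :: "'k \<Rightarrow> real"
  assumes "\<And>l. 0 \<le> \<alpha> l \<and> \<alpha> l \<le> 2" "\<And>l. 0 \<le> w l" "\<And>l. \<bar>\<theta> $ l\<bar> \<le> pi"
  shows "(\<Sum>l\<in>UNIV. w l * (2 - 2 * cos (\<theta> $ l)) powr (\<alpha> l / 2)) \<le> (\<Sum>l\<in>UNIV. w l * \<bar>\<theta> $ l\<bar> powr \<alpha> l)"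
    and "(\<Sum>l\<in>UNIV. w l * \<bar>\<theta> $ l\<bar> powr \<alpha> l) \<le> pi\<^sup>2/4 * (\<Sum>l\<in>UNIV. w l * (2 - 2 * cos (\<theta> $ l)) powr (\<alpha> l / 2))"
proof -
  show "(\<Sum>l\<in>UNIV. w l * (2 - 2 * cos (\<theta> $ l)) powr (\<alpha> l / 2)) \<le> (\<Sum>l\<in>UNIV. w l * \<bar>\<theta> $ l\<bar> powr \<alpha> l)"
    using assms by (intro sum_mono mult_left_mono symbol_le_abs_powr) auto
  have "w l * \<bar>\<theta> $ l\<bar> powr \<alpha> l \<le> pi\<^sup>2/4 * (w l * (2 - 2 * cos (\<theta> $ l)) powr (\<alpha> l / 2))" for l
    using mult_left_mono[OF abs_powr_le_symbol[of "\<alpha> l" "\<theta> $ l"] assms(2)] assms(1,3)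
    by (simp add: mult_ac)
  then show "(\<Sum>l\<in>UNIV. w l * \<bar>\<theta> $ l\<bar> powr \<alpha> l) \<le> pi\<^sup>2/4 * (\<Sum>l\<in>UNIV. w l * (2 - 2 * cos (\<theta> $ l)) powr (\<alpha> l / 2))"
    by (simp add: sum_distrib_left sum_mono)
qed

lemma weighted_symbol_sums_less:
  fixes \<theta> :: "real^'k::finite" and \<alpha> w :: "'k \<Rightarrow> real"
  assumes "\<And>l. 0 < \<alpha> l \<and> \<alpha> l < 2" "\<And>l. 0 < w l" "\<And>l. \<theta> $ l \<noteq> 0 \<and> \<bar>\<theta> $ l\<bar> \<le> pi"
  shows "(\<Sum>l\<in>UNIV. w l * (2 - 2 * cos (\<theta> $ l)) powr (\<alpha> l / 2)) < (\<Sum>l\<in>UNIV. w l * \<bar>\<theta> $ l\<bar> powr \<alpha> l)"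
    and "(\<Sum>l\<in>UNIV. w l * \<bar>\<theta> $ l\<bar> powr \<alpha> l) < pi\<^sup>2/4 * (\<Sum>l\<in>UNIV. w l * (2 - 2 * cos (\<theta> $ l)) powr (\<alpha> l / 2))"
proof -
  show "(\<Sum>l\<in>UNIV. w l * (2 - 2 * cos (\<theta> $ l)) powr (\<alpha> l / 2)) < (\<Sum>l\<in>UNIV. w l * \<bar>\<theta> $ l\<bar> powr \<alpha> l)"
    using assms by (intro sum_strict_mono mult_strict_left_mono symbol_less_abs_powr) auto
  have "w l * \<bar>\<theta> $ l\<bar> powr \<alpha> l < pi\<^sup>2/4 * (w l * (2 - 2 * cos (\<theta> $ l)) powr (\<alpha> l / 2))" for l
    using mult_strict_left_mono[OF abs_powr_less_symbol[of "\<alpha> l" "\<theta> $ l"] assms(2)] assms(1,3)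
    by (simp add: mult_ac)
  then show "(\<Sum>l\<in>UNIV. w l * \<bar>\<theta> $ l\<bar> powr \<alpha> l) < pi\<^sup>2/4 * (\<Sum>l\<in>UNIV. w l * (2 - 2 * cos (\<theta> $ l)) powr (\<alpha> l / 2))"
    by (simp add: sum_distrib_left sum_strict_mono)
qed

definition fourier_mode :: "('k::finite \<Rightarrow> nat) \<Rightarrow> real^'k \<Rightarrow> complex" where
  "fourier_mode i \<theta> = exp (\<i> * complex_of_real (\<Sum>l\<in>UNIV. real (i l) * \<theta> $ l))"

definition trig_poly :: "('k::finite \<Rightarrow> nat) \<Rightarrow> (('k \<Rightarrow> nat) \<Rightarrow> real) \<Rightarrow> real^'k \<Rightarrow> complex" where
  "trig_poly n z \<theta> = (\<Sum>i\<in>multi_idx n. complex_of_real (z i) * fourier_mode i \<theta>)"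

lemma finite_multi_idx [simp]: "finite (multi_idx (n :: 'k::finite \<Rightarrow> nat))"
proof -
  have "multi_idx n = Pi\<^sub>E UNIV (\<lambda>l. {..<n l})"
    by (auto simp: multi_idx_def PiE_def Pi_def)
  then show ?thesis by (simp add: finite_PiE)
qed

lemma continuous_on_fourier_mode [continuous_intros]: "continuous_on S (fourier_mode i)"
  unfolding fourier_mode_def by (intro continuous_intros)

lemma continuous_on_trig_poly [continuous_intros]: "continuous_on S (trig_poly n z)"
  unfolding trig_poly_def by (intro continuous_intros)

lemma exp_diff_eq_fourier_modes:
  "exp (\<i> * complex_of_real (\<Sum>l\<in>UNIV. real_of_int (int (i l) - int (j l)) * \<theta> $ l))
   = fourier_mode i \<theta> * cnj (fourier_mode j \<theta>)"
proof -
  have "(\<Sum>l\<in>UNIV. real_of_int (int (i l) - int (j l)) * \<theta> $ l)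
     = (\<Sum>l\<in>UNIV. real (i l) * \<theta> $ l) - (\<Sum>l\<in>UNIV. real (j l) * \<theta> $ l)"
    by (simp add: sum_subtractf[symmetric] algebra_simps)
  moreover have "exp (\<i> * complex_of_real (A - B)) = exp (\<i> * complex_of_real A) * exp (cnj (\<i> * complex_of_real B))"
    for A B by (simp add: exp_add[symmetric] algebra_simps)
  ultimately show ?thesis
    unfolding fourier_mode_def exp_cnj by (simp only:)
qed

lemma toeplitz_qform_integrand:
  "(\<Sum>i\<in>multi_idx n. \<Sum>j\<in>multi_idx n. complex_of_real (z i) *
      (complex_of_real (h \<theta>) * (fourier_mode i \<theta> * cnj (fourier_mode j \<theta>))) * complex_of_real (z j))
   = complex_of_real (h \<theta> * (cmod (trig_poly n z \<theta>))\<^sup>2)"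
proof -
  have "complex_of_real (h \<theta> * (cmod (trig_poly n z \<theta>))\<^sup>2)
      = complex_of_real (h \<theta>) * (trig_poly n z \<theta> * cnj (trig_poly n z \<theta>))"
    by (simp only: of_real_mult complex_norm_square)
  also have "\<dots> = complex_of_real (h \<theta>) * (\<Sum>i\<in>multi_idx n. \<Sum>j\<in>multi_idx n.
       (complex_of_real (z i) * fourier_mode i \<theta>) * (complex_of_real (z j) * cnj (fourier_mode j \<theta>)))"
    unfolding trig_poly_def cnj_sum complex_cnj_mult complex_cnj_complex_of_real sum_product ..
  finally show ?thesis
    unfolding sum_distrib_left by (simp add: mult_ac)
qed

lemma toeplitz_qform_eq_integral:
  fixes h :: "real^'k::finite \<Rightarrow> real"
  assumes "continuous_on (cbox (\<chi> i. - pi) (\<chi> i. pi)) h"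
  shows "toeplitz_qform h n z =
     complex_of_real (integral (cbox (\<chi> i. - pi) (\<chi> i. pi)) (\<lambda>\<theta>. h \<theta> * (cmod (trig_poly n z \<theta>))\<^sup>2)
       / (2 * pi) ^ CARD('k))"
proof -
  define B :: "(real^'k) set" where "B = cbox (\<chi> i. - pi) (\<chi> i. pi)"
  define F where "F i j \<theta> = complex_of_real (h \<theta>) * (fourier_mode i \<theta> * cnj (fourier_mode j \<theta>))" for i j \<theta>
  define G where "G \<theta> = h \<theta> * (cmod (trig_poly n z \<theta>))\<^sup>2" for \<theta>
  define C where "C = complex_of_real ((2 * pi) ^ CARD('k))"
  have "F i j integrable_on B" for i j
    unfolding F_def B_def by (intro integrable_continuous continuous_intros assms)
  then have "((\<lambda>\<theta>. \<Sum>i\<in>multi_idx n. \<Sum>j\<in>multi_idx n. complex_of_real (z i) * F i j \<theta> * complex_of_real (z j))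
      has_integral (\<Sum>i\<in>multi_idx n. \<Sum>j\<in>multi_idx n. complex_of_real (z i) * integral B (F i j) * complex_of_real (z j))) B"
    by (intro has_integral_sum finite_multi_idx has_integral_mult_left has_integral_mult_right integrable_integral)
  moreover have "G integrable_on B"
    unfolding G_def B_def by (intro integrable_continuous continuous_intros assms)
  then have "((\<lambda>\<theta>. \<Sum>i\<in>multi_idx n. \<Sum>j\<in>multi_idx n. complex_of_real (z i) * F i j \<theta> * complex_of_real (z j))
      has_integral complex_of_real (integral B G)) B"
    unfolding F_def toeplitz_qform_integrand G_def[symmetric]
    by (intro has_integral_of_real integrable_integral)
  ultimately have "(\<Sum>i\<in>multi_idx n. \<Sum>j\<in>multi_idx n. complex_of_real (z i) * integral B (F i j) * complex_of_real (z j))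
     = complex_of_real (integral B G)"
    by (rule has_integral_unique)
  moreover have "toeplitz_entry h i j = integral B (F i j) / C" for i j
    unfolding toeplitz_entry_def fourier_coeff_def F_def C_def B_def exp_diff_eq_fourier_modes by simp
  ultimately have "toeplitz_qform h n z = complex_of_real (integral B G) / C"
    unfolding toeplitz_qform_def by (simp add: sum_divide_distrib[symmetric])
  then show ?thesis
    unfolding B_def G_def C_def by simp
qed

lemma integral_pos_at_interior_point:
  fixes g :: "'a::euclidean_space \<Rightarrow> real"
  assumes cont: "continuous_on (cbox a b) g" and nonneg: "\<And>x. x \<in> cbox a b \<Longrightarrow> 0 \<le> g x"
    and x0: "x0 \<in> box a b" and pos: "0 < g x0"
  shows "0 < integral (cbox a b) g"
proof -
  have "open (box a b \<inter> g -` {g x0/2<..})"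
    using continuous_on_subset[OF cont box_subset_cbox] by (intro continuous_open_preimage) auto
  moreover have "x0 \<in> box a b \<inter> g -` {g x0/2<..}" using x0 pos by auto
  ultimately obtain c d where cd: "cbox c d \<subseteq> box a b \<inter> g -` {g x0/2<..}" "\<forall>i\<in>Basis. c \<bullet> i < d \<bullet> i"
    by (rule open_contains_cbox)
  have sub: "cbox c d \<subseteq> cbox a b" using cd(1) box_subset_cbox by blast
  have "0 < Henstock_Kurzweil_Integration.content (cbox c d) * (g x0/2)"
    using cd(2) pos by (intro mult_pos_pos content_pos_lt) auto
  also have "\<dots> = integral (cbox c d) (\<lambda>_. g x0/2)" by simp
  also have "\<dots> \<le> integral (cbox c d) g"
    using cd(1) continuous_on_subset[OF cont sub] by (intro integral_le integrable_continuous) auto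
  also have "\<dots> \<le> integral (cbox a b) g"
    using sub nonneg continuous_on_subset[OF cont sub] cont
    by (intro integral_subset_le integrable_continuous) auto
  finally show ?thesis .
qed

lemma integral_weighted_strict_mono_at_interior_point:
  fixes f g w :: "'a::euclidean_space \<Rightarrow> real"
  assumes "continuous_on (cbox a b) f" "continuous_on (cbox a b) g" "continuous_on (cbox a b) w"
    and "\<And>x. x \<in> cbox a b \<Longrightarrow> f x \<le> g x" "\<And>x. x \<in> cbox a b \<Longrightarrow> 0 \<le> w x"
    and "x0 \<in> box a b" "f x0 < g x0" "0 < w x0"
  shows "integral (cbox a b) (\<lambda>x. f x * w x) < integral (cbox a b) (\<lambda>x. g x * w x)"
proof -
  have "0 < integral (cbox a b) (\<lambda>x. (g x - f x) * w x)"
    using assms by (intro integral_pos_at_interior_point continuous_intros) auto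
  also have "\<dots> = integral (cbox a b) (\<lambda>x. g x * w x) - integral (cbox a b) (\<lambda>x. f x * w x)"
    unfolding left_diff_distrib using assms(1-3)
    by (intro integral_diff integrable_continuous continuous_intros)
  finally show ?thesis by simp
qed

lemma ratio_between:
  fixes a b c :: real
  assumes "a < b" "b < c * a" "1 \<le> c"
  shows "1 < b / a \<and> b / a < c"
proof -
  have "0 < a"
  proof (rule ccontr)
    assume "\<not> 0 < a"
    then have "c * a \<le> 1 * a" using mult_right_mono_neg[of 1 c a] assms(3) by simp
    then show False using assms(1,2) by linarith
  qed
  then show ?thesis using assms(1,2) by (simp add: field_simps)
qed

lemma base_expansion_unique:
  fixes c d :: "nat \<Rightarrow> nat"
  assumes "\<And>k. k < M \<Longrightarrow> c k < N" "\<And>k. k < M \<Longrightarrow> d k < N"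
    and "(\<Sum>k<M. c k * N ^ k) = (\<Sum>k<M. d k * N ^ k)"
    and "m < M"
  shows "c m = d m"
  using assms
proof (induction M arbitrary: c d m)
  case 0
  then show ?case by simp
next
  case (Suc M)
  have expand: "(\<Sum>k<Suc M. f k * N ^ k) = f 0 + N * (\<Sum>k<M. f (Suc k) * N ^ k)" for f
    unfolding sum.lessThan_Suc_shift by (simp add: sum_distrib_left mult_ac)
  have c0: "c 0 < N" and d0: "d 0 < N" using Suc.prems(1,2) by auto
  have eq: "c 0 + N * (\<Sum>k<M. c (Suc k) * N ^ k) = d 0 + N * (\<Sum>k<M. d (Suc k) * N ^ k)"
    using Suc.prems(3) unfolding expand .
  then have "(c 0 + N * (\<Sum>k<M. c (Suc k) * N ^ k)) mod N = (d 0 + N * (\<Sum>k<M. d (Suc k) * N ^ k)) mod N"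
    by simp
  then have "c 0 = d 0" using c0 d0 by simp
  with eq c0 have "(\<Sum>k<M. c (Suc k) * N ^ k) = (\<Sum>k<M. d (Suc k) * N ^ k)" by simp
  then have "c (Suc k) = d (Suc k)" if "k < M" for k
    using Suc.IH[of "c \<circ> Suc" "d \<circ> Suc" k] Suc.prems(1,2) that by simp
  with \<open>c 0 = d 0\<close> Suc.prems(4) show ?case by (cases m) auto
qed

lemma kronecker_substitution_inj:
  fixes e :: "'k::finite \<Rightarrow> nat" and i j :: "'k \<Rightarrow> nat"
  assumes e: "bij_betw e UNIV {..<CARD('k)}"
    and "\<And>l. i l < N" "\<And>l. j l < N"
    and "(\<Sum>l\<in>UNIV. i l * N ^ e l) = (\<Sum>l\<in>UNIV. j l * N ^ e l)"
  shows "i = j"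
proof
  fix l
  define h where "h = inv_into UNIV e"
  have h: "bij_betw h {..<CARD('k)} UNIV"
    unfolding h_def using e by (rule bij_betw_inv_into)
  have digits: "(\<Sum>l\<in>UNIV. f l * N ^ e l) = (\<Sum>k<CARD('k). f (h k) * N ^ k)" for f :: "'k \<Rightarrow> nat"
  proof -
    have "e (h k) = k" if "k < CARD('k)" for k
      unfolding h_def using e that by (simp add: bij_betw_inv_into_right)
    then show ?thesis
      using sum.reindex_bij_betw[OF h, of "\<lambda>l. f l * N ^ e l"] by simp
  qed
  have "(\<Sum>k<CARD('k). i (h k) * N ^ k) = (\<Sum>k<CARD('k). j (h k) * N ^ k)"
    using assms(4) unfolding digits .
  moreover have "e l < CARD('k)"
    using e by (auto simp: bij_betw_def)
  ultimately have "i (h (e l)) = j (h (e l))"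
    using base_expansion_unique[of "CARD('k)" "\<lambda>k. i (h k)" N "\<lambda>k. j (h k)" "e l"] assms(2,3)
    by blast
  moreover have "h (e l) = l"
    unfolding h_def using e by (simp add: bij_betw_def)
  ultimately show "i l = j l" by simp
qed

definition kronecker_poly :: "('k::finite \<Rightarrow> nat) \<Rightarrow> nat \<Rightarrow> ('k \<Rightarrow> nat) \<Rightarrow> (('k \<Rightarrow> nat) \<Rightarrow> real) \<Rightarrow> complex poly" where
  "kronecker_poly e N n z = (\<Sum>i\<in>multi_idx n. monom (complex_of_real (z i)) (\<Sum>l\<in>UNIV. i l * N ^ e l))"

lemma trig_poly_along_kronecker_curve:
  "trig_poly n z (\<chi> l. t * real (N ^ e l)) = poly (kronecker_poly e N n z) (exp (\<i> * complex_of_real t))"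
proof -
  have "fourier_mode i (\<chi> l. t * real (N ^ e l)) = exp (\<i> * complex_of_real t) ^ (\<Sum>l\<in>UNIV. i l * N ^ e l)" for i
  proof -
    have "fourier_mode i (\<chi> l. t * real (N ^ e l))
        = exp (of_nat (\<Sum>l\<in>UNIV. i l * N ^ e l) * (\<i> * complex_of_real t))"
      unfolding fourier_mode_def by (simp add: sum_distrib_left sum_distrib_right mult_ac)
    then show ?thesis by (simp only: exp_of_nat_mult)
  qed
  then show ?thesis
    unfolding trig_poly_def kronecker_poly_def poly_sum poly_monom by simp
qed

lemma kronecker_poly_nonzero:
  fixes e :: "'k::finite \<Rightarrow> nat"
  assumes "bij_betw e UNIV {..<CARD('k)}" "\<And>l. n l \<le> N" "i0 \<in> multi_idx n" "z i0 \<noteq> 0"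
  shows "kronecker_poly e N n z \<noteq> 0"
proof -
  define s where "s i = (\<Sum>l\<in>UNIV. i l * N ^ e l)" for i :: "'k \<Rightarrow> nat"
  have "s i = s i0 \<longleftrightarrow> i = i0" if "i \<in> multi_idx n" for i
    using that assms(1-3) kronecker_substitution_inj[OF assms(1), of i N i0]
    by (auto simp: s_def multi_idx_def intro: less_le_trans)
  then have "coeff (kronecker_poly e N n z) (s i0) = (\<Sum>i\<in>multi_idx n. if i = i0 then complex_of_real (z i) else 0)"
    unfolding kronecker_poly_def coeff_sum coeff_monom s_def[symmetric] by (intro sum.cong refl) auto
  also have "\<dots> = complex_of_real (z i0)" using assms(3) by simp
  finally show ?thesis using assms(4) by auto
qed

lemma poly_exp_nonzero_on_interval:
  fixes p :: "complex poly"
  assumes "p \<noteq> 0" "0 < \<epsilon>"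
  shows "\<exists>t. 0 < t \<and> t < \<epsilon> \<and> poly p (exp (\<i> * complex_of_real t)) \<noteq> 0"
proof -
  define T where "T = {0<..<min \<epsilon> pi}"
  have "inj_on (\<lambda>t. exp (\<i> * complex_of_real t)) T"
  proof (rule inj_onI)
    fix x y assume "x \<in> T" "y \<in> T" "exp (\<i> * complex_of_real x) = exp (\<i> * complex_of_real y)"
    then have "cos x = cos y" "x \<in> {0..pi}" "y \<in> {0..pi}"
      by (auto simp: T_def dest: arg_cong[where f = Re] simp: Re_exp)
    then show "x = y" using cos_inj_pi by auto
  qed
  moreover have "infinite T" unfolding T_def using assms(2) by simp
  ultimately have "infinite ((\<lambda>t. exp (\<i> * complex_of_real t)) ` T)"
    using finite_imageD by blast
  then have "\<not> (\<lambda>t. exp (\<i> * complex_of_real t)) ` T \<subseteq> {x. poly p x = 0}"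
    using poly_roots_finite[OF assms(1)] finite_subset by blast
  then show ?thesis unfolding T_def by auto
qed

lemma trig_poly_nonzero_in_open_cube:
  fixes n :: "'k::finite \<Rightarrow> nat" and z :: "('k \<Rightarrow> nat) \<Rightarrow> real"
  assumes "\<exists>i\<in>multi_idx n. z i \<noteq> 0"
  shows "\<exists>\<theta>::real^'k. (\<forall>l. 0 < \<theta> $ l \<and> \<theta> $ l < pi) \<and> trig_poly n z \<theta> \<noteq> 0"
proof -
  obtain e :: "'k \<Rightarrow> nat" where e: "bij_betw e UNIV {..<CARD('k)}"
    using ex_bij_betw_finite_nat[of "UNIV :: 'k set"] by (auto simp: atLeast0LessThan)
  define N where "N = Suc (Max (range n))"
  have "n l \<le> N" for l unfolding N_def by (simp add: le_SucI)
  then have "kronecker_poly e N n z \<noteq> 0"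
    using assms e kronecker_poly_nonzero by blast
  then obtain t where t: "0 < t" "t < pi / N ^ CARD('k)"
    and nonzero: "poly (kronecker_poly e N n z) (exp (\<i> * complex_of_real t)) \<noteq> 0"
    using poly_exp_nonzero_on_interval[of _ "pi / N ^ CARD('k)"] by (auto simp: N_def)
  have "0 < t * real (N ^ e l) \<and> t * real (N ^ e l) < pi" for l
  proof -
    have "e l < CARD('k)"
      using e by (auto simp: bij_betw_def)
    then have "N ^ e l \<le> N ^ CARD('k)"
      by (intro power_increasing) (auto simp: N_def)
    then have "t * real (N ^ e l) \<le> t * N ^ CARD('k)"
      using t(1) by (intro mult_left_mono) (simp_all flip: of_nat_power)
    also have "\<dots> < pi"
      using t(2) by (simp add: field_simps N_def)
    finally show ?thesis using t(1) by (simp add: N_def)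
  qed
  moreover have "trig_poly n z (\<chi> l. t * real (N ^ e l)) \<noteq> 0"
    unfolding trig_poly_along_kronecker_curve by (rule nonzero)
  ultimately show ?thesis
    by (intro exI[of _ "\<chi> l. t * real (N ^ e l)"]) simp
qed

theorem lemma8:
  fixes \<alpha> lw :: "'k::finite \<Rightarrow> real"
    and n :: "'k \<Rightarrow> nat"
    and z :: "('k \<Rightarrow> nat) \<Rightarrow> real"
    and q r :: "real^'k \<Rightarrow> real"
  assumes "\<And>l. 1 < \<alpha> l \<and> \<alpha> l < 2"
    and "\<And>l. lw l > 0"
    and "q = (\<lambda>\<theta>. \<Sum>l\<in>UNIV. lw l * \<bar>\<theta> $ l\<bar> powr \<alpha> l)"
    and "r = (\<lambda>\<theta>. \<Sum>l\<in>UNIV. lw l * (2 - 2 * cos (\<theta> $ l)) powr (\<alpha> l / 2))"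
    and "\<exists>i\<in>multi_idx n. z i \<noteq> 0"
  shows "toeplitz_qform q n z \<in> \<real> \<and> toeplitz_qform r n z \<in> \<real> \<and>
         1 < Re (toeplitz_qform q n z) / Re (toeplitz_qform r n z) \<and>
         Re (toeplitz_qform q n z) / Re (toeplitz_qform r n z) < pi\<^sup>2 / 4"
proof -
  let ?B = "cbox (\<chi> i. - pi) (\<chi> i. pi) :: (real^'k) set"
  define w where "w \<theta> = (cmod (trig_poly n z \<theta>))\<^sup>2" for \<theta>
  define IQ where "IQ = integral ?B (\<lambda>\<theta>. q \<theta> * w \<theta>)"
  define IR where "IR = integral ?B (\<lambda>\<theta>. r \<theta> * w \<theta>)"
  have \<alpha>: "\<And>l. 0 < \<alpha> l \<and> \<alpha> l < 2" using assms(1) by (meson less_trans zero_less_one)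
  have cont: "continuous_on ?B q" "continuous_on ?B r" "continuous_on ?B w"
    unfolding assms(3,4) w_def using \<alpha> by (auto intro!: continuous_intros continuous_on_powr' simp: cos_le_one)
  have forms: "toeplitz_qform q n z = of_real (IQ / (2 * pi) ^ CARD('k))"
    "toeplitz_qform r n z = of_real (IR / (2 * pi) ^ CARD('k))"
    unfolding IQ_def IR_def w_def using cont(1,2) by (simp_all only: toeplitz_qform_eq_integral)
  have "\<bar>\<theta> $ l\<bar> \<le> pi" if "\<theta> \<in> ?B" for \<theta> l
    using that unfolding mem_box_cart by (simp add: abs_le_iff) (metis minus_le_iff)
  then have le: "r \<theta> \<le> q \<theta>" "q \<theta> \<le> pi\<^sup>2/4 * r \<theta>" if "\<theta> \<in> ?B" for \<theta>
    unfolding assms(3,4) using weighted_symbol_sums_le[of \<alpha> lw \<theta>] \<alpha> assms(2) that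
    by (auto simp: less_imp_le)
  obtain \<theta>0 where \<theta>0: "\<And>l. 0 < \<theta>0 $ l \<and> \<theta>0 $ l < pi" "trig_poly n z \<theta>0 \<noteq> 0"
    using trig_poly_nonzero_in_open_cube[OF assms(5)] by blast
  then have interior: "\<theta>0 \<in> box (\<chi> i. - pi) (\<chi> i. pi)"
    by (auto simp: mem_box_cart intro: less_trans[of "- pi" 0])
  have "\<theta>0 $ l \<noteq> 0 \<and> \<bar>\<theta>0 $ l\<bar> \<le> pi" for l
    using \<theta>0(1)[of l] by auto
  then have strict: "r \<theta>0 < q \<theta>0" "q \<theta>0 < pi\<^sup>2/4 * r \<theta>0"
    unfolding assms(3,4) using weighted_symbol_sums_less[of \<alpha> lw \<theta>0] \<alpha> assms(2) by auto
  have "continuous_on ?B (\<lambda>\<theta>. pi\<^sup>2/4 * r \<theta>)"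
    using cont(2) by (rule continuous_on_mult_left)
  moreover have "0 < w \<theta>0" "\<And>\<theta>. 0 \<le> w \<theta>" using \<theta>0(2) by (simp_all add: w_def)
  ultimately have "IR < IQ" "IQ < pi\<^sup>2/4 * IR"
    using integral_weighted_strict_mono_at_interior_point[OF cont(2,1,3) le(1) _ interior strict(1)]
      integral_weighted_strict_mono_at_interior_point[OF cont(1) _ cont(3) le(2) _ interior strict(2)]
    unfolding IQ_def IR_def by (auto simp: mult.assoc)
  moreover have "1 \<le> pi\<^sup>2/4"
    using power_mono[OF pi_ge_two, of 2] by simp
  ultimately show ?thesis
    unfolding forms Re_complex_of_real using ratio_between[of IR IQ "pi\<^sup>2/4"] by simp
qed

end
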